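(* Let $\alpha=\alpha(\delta,f^\delta)$ be chosen by the discrepancy principle with fixed radii $1<\underline\tau\le\overline\tau<\infty$, and suppose $\varphi^\dagger$ satisfies the variational source condition with constant $\sigma\in(0,1]$ and concave index function $\Psi$, and in particular that $\frac{\sigma}{2}\big(J(\varphi^\dagger)-J(\varphi)\big)\le\Psi(\|\mathcal T\varphi-\mathcal T\varphi^\dagger\|_{\mathcal H})$ for all $\varphi\in\mathcal V$. Then $$\frac{\sigma}{4}(\underline\tau-1)\frac{\delta^2}{\Psi(\delta)}\le\alpha(\delta,f^\delta).$$
   Context: Let $\mathcal V$ be a Banach space with dual pairing $\langle\cdot,\cdot\rangle$, $\mathcal H$ a Hilbert space, and $\mathcal T:\mathcal V\to\mathcal H$ a bounded linear, injective, compact operator. Let $J:\mathcal V\to[0,\infty)$ be convex, with subdifferential $\partial J(u)=\{p\in\mathcal V^*: J(v)-J(u)-\langle p,v-u\rangle\ge0\ \forall v\}$; for $p\in\partial J(u^* )$ the Bregman distance is $D_J(u,u^* )=J(u)-J(u^* )-\langle p,u-u^*\rangle$. Exact data $f^\dagger$, noise level $\delta>0$, noisy data $f^\delta$ with $\|f^\dagger-f^\delta\|_{\mathcal H}\le\delta$. $F_\alpha(\varphi,f^\delta)=\frac12\|\mathcal T\varphi-f^\delta\|^2_{\mathcal H}+\alpha J(\varphi)$ and $\varphi^\delta_\alpha$ is a minimizer of $F_\alpha(\cdot,f^\delta)$. $\varphi^\dagger$ is a $J$-minimizing solution: $\mathcal T\varphi^\dagger=f^\dagger$, $J(\varphi^\dagger)=\min\{J(\varphi):\mathcal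 T\varphi=f^\dagger\}$. An index function is a continuous, monotonically increasing $\Psi:[0,\infty)\to[0,\infty)$ with $\Psi(0)=0$, positive on $(0,\infty)$. Discrepancy principle: $\underline\tau\delta\le\|\mathcal T\varphi^\delta_{\alpha(\delta,f^\delta)}-f^\delta\|_{\mathcal H}\le\overline\tau\delta$. Variational source condition (VSC): there exist $\sigma\in(0,1]$ and a concave index function $\Psi$ with $\frac\sigma2D_J(\varphi,\varphi^\dagger)\le J(\varphi)-J(\varphi^\dagger)+\Psi(\|\mathcal T\varphi-\mathcal T\varphi^\dagger\|_{\mathcal H})$ for all $\varphi\in\mathcal V$ (with a fixed $p\in\partial J(\varphi^\dagger)$). *)

theory Defs
  imports "HOL-Analysis.Analysis"
begin

text \<open>Elements of the dual space V* are represented as bounded linear functionals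
  'v \<Rightarrow> real; the dual pairing is application.\<close>

definition compact_operator :: "('v::real_normed_vector \<Rightarrow> 'h::real_normed_vector) \<Rightarrow> bool" where
  "compact_operator T \<longleftrightarrow> bounded_linear T \<and>
     (\<forall>S. bounded S \<longrightarrow> compact (closure (T ` S)))"

definition subdiff :: "('v::real_normed_vector \<Rightarrow> real) \<Rightarrow> 'v \<Rightarrow> ('v \<Rightarrow> real) set" where
  "subdiff J u = {p. bounded_linear p \<and> (\<forall>v. J v - J u - p (v - u) \<ge> 0)}"

definition bregman :: "('v::real_normed_vector \<Rightarrow> real) \<Rightarrow> ('v \<Rightarrow> real) \<Rightarrow> 'v \<Rightarrow> 'v \<Rightarrow> real" where
  "bregman J p u ustar = J u - J ustar - p (u - ustar)"

definition tikhonov :: "('v \<Rightarrow> 'h::real_normed_vector) \<Rightarrow> ('v \<Rightarrow> real) \<Rightarrow> real \<Rightarrow> 'v \<Rightarrow> 'h \<Rightarrow> real" where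
  "tikhonov T J \<alpha> \<phi> f = (1/2) * (norm (T \<phi> - f))\<^sup>2 + \<alpha> * J \<phi>"

definition index_function :: "(real \<Rightarrow> real) \<Rightarrow> bool" where
  "index_function \<Psi> \<longleftrightarrow> continuous_on {0..} \<Psi> \<and> mono_on {0..} \<Psi> \<and> \<Psi> 0 = 0
     \<and> (\<forall>t>0. \<Psi> t > 0)"

definition J_minimizing_solution :: "('v \<Rightarrow> 'h) \<Rightarrow> ('v \<Rightarrow> real) \<Rightarrow> 'h \<Rightarrow> 'v \<Rightarrow> bool" where
  "J_minimizing_solution T J f \<phi> \<longleftrightarrow> T \<phi> = f \<and> (\<forall>\<psi>. T \<psi> = f \<longrightarrow> J \<phi> \<le> J \<psi>)"

definition VSC :: "('v::real_normed_vector \<Rightarrow> 'h::real_normed_vector) \<Rightarrow> ('v \<Rightarrow> real) \<Rightarrow> ('v \<Rightarrow> real)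
     \<Rightarrow> real \<Rightarrow> (real \<Rightarrow> real) \<Rightarrow> 'v \<Rightarrow> bool" where
  "VSC T J p \<sigma> \<Psi> \<phi>d \<longleftrightarrow> 0 < \<sigma> \<and> \<sigma> \<le> 1 \<and> index_function \<Psi> \<and> concave_on {0..} \<Psi>
     \<and> p \<in> subdiff J \<phi>d
     \<and> (\<forall>\<phi>. \<sigma> / 2 * bregman J p \<phi> \<phi>d \<le> J \<phi> - J \<phi>d + \<Psi> (norm (T \<phi> - T \<phi>d)))"

end

theory Submission
  imports Defs
begin

text \<open>Comparing the Tikhonov functional at \<open>\<phi>\<alpha>\<close> and at \<open>\<phi>d\<close> bounds the excess residual
  \<open>\<parallel>T \<phi>\<alpha> - f\<delta>\<parallel>\<^sup>2 - \<delta>\<^sup>2\<close> by \<open>2\<alpha>(J \<phi>d - J \<phi>\<alpha>)\<close>, and the hypothesis on \<open>J \<phi>d - J \<phi>\<alpha>\<close> bounds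
  this by \<open>(4\<alpha>/\<sigma>) \<Psi>(\<parallel>T \<phi>\<alpha> - T \<phi>d\<parallel>)\<close>. Concavity with \<open>\<Psi> 0 = 0\<close> makes \<open>\<Psi> t / t\<close> nonincreasing,
  so \<open>\<Psi>(\<parallel>T \<phi>\<alpha> - T \<phi>d\<parallel>) \<le> \<Psi>(a + \<delta>) \<le> (a + \<delta>)/\<delta> \<Psi> \<delta>\<close> with \<open>a = \<parallel>T \<phi>\<alpha> - f\<delta>\<parallel>\<close>.
  Dividing \<open>a\<^sup>2 - \<delta>\<^sup>2 = (a - \<delta>)(a + \<delta>)\<close> by \<open>a + \<delta>\<close> and using \<open>a - \<delta> \<ge> (\<tau>l - 1)\<delta>\<close> from the
  discrepancy principle gives the lower bound on \<open>\<alpha>\<close>.\<close>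

lemma concave_on_le_scaled:
  fixes \<Psi> :: "real \<Rightarrow> real"
  assumes "concave_on {0..} \<Psi>" "0 \<le> \<Psi> 0" "0 < d" "d \<le> r"
  shows "\<Psi> r \<le> r / d * \<Psi> d"
proof -
  have "(1 - d/r) * \<Psi> 0 + (d/r) * \<Psi> r \<le> \<Psi> d"
    using concave_onD[OF assms(1), of "d/r" 0 r] assms(3,4) by auto
  moreover have "0 \<le> (1 - d/r) * \<Psi> 0"
    using assms(2-4) by simp
  ultimately have "d/r * \<Psi> r \<le> \<Psi> d"
    by simp
  then show ?thesis
    using assms(3,4) by (simp add: field_simps)
qed

lemma concave_index_function_le_scaled:
  assumes "index_function \<Psi>" "concave_on {0..} \<Psi>"
    and "0 < d" "0 \<le> t" "t \<le> s" "d \<le> s"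
  shows "\<Psi> t \<le> s / d * \<Psi> d"
proof -
  have "\<Psi> t \<le> \<Psi> s"
    using assms(1,4,5) unfolding index_function_def by (auto intro: mono_onD)
  also have "\<dots> \<le> s / d * \<Psi> d"
    using assms unfolding index_function_def by (intro concave_on_le_scaled) auto
  finally show ?thesis .
qed

lemma tikhonov_minimizer_residual_le:
  assumes "\<forall>\<phi>. tikhonov T J \<alpha> \<phi>\<alpha> f\<delta> \<le> tikhonov T J \<alpha> \<phi> f\<delta>"
    and "T \<phi>d = fd" "norm (fd - f\<delta>) \<le> \<delta>"
  shows "(norm (T \<phi>\<alpha> - f\<delta>))\<^sup>2 - \<delta>\<^sup>2 \<le> 2 * \<alpha> * (J \<phi>d - J \<phi>\<alpha>)"
proof -
  have "(1/2) * (norm (T \<phi>\<alpha> - f\<delta>))\<^sup>2 + \<alpha> * J \<phi>\<alpha> \<le> (1/2) * (norm (fd - f\<delta>))\<^sup>2 + \<alpha> * J \<phi>d"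
    using assms(1,2) unfolding tikhonov_def by metis
  moreover have "(norm (fd - f\<delta>))\<^sup>2 \<le> \<delta>\<^sup>2"
    using assms(3) by (simp add: power_mono)
  ultimately show ?thesis
    by (simp add: algebra_simps)
qed

lemma discrepancy_parameter_lower_bound:
  fixes a c \<alpha> \<delta> \<sigma> \<tau> :: real
  assumes "0 < \<delta>" "0 < \<sigma>" "0 < c" "1 < \<tau>" "\<tau> * \<delta> \<le> a"
    and "\<sigma> * (a\<^sup>2 - \<delta>\<^sup>2) \<le> 4 * \<alpha> * ((a + \<delta>) / \<delta> * c)"
  shows "\<sigma> / 4 * (\<tau> - 1) * \<delta>\<^sup>2 / c \<le> \<alpha>"
proof -
  have "\<delta> < a"
    using mult_strict_right_mono[OF assms(4,1)] assms(5) by simp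
  have "\<sigma> * (a - \<delta>) * (a + \<delta>) \<le> 4 * \<alpha> * c / \<delta> * (a + \<delta>)"
    using assms(6) by (simp add: power2_eq_square algebra_simps)
  then have "\<sigma> * (a - \<delta>) \<le> 4 * \<alpha> * c / \<delta>"
    by (rule mult_right_le_imp_le) (use \<open>\<delta> < a\<close> assms(1) in simp)
  moreover have "\<sigma> * ((\<tau> - 1) * \<delta>) \<le> \<sigma> * (a - \<delta>)"
    using assms(2,5) by (simp add: algebra_simps)
  ultimately have "\<sigma> * ((\<tau> - 1) * \<delta>) \<le> 4 * \<alpha> * c / \<delta>"
    by (rule order_trans[rotated])
  then have "\<sigma> * (\<tau> - 1) * \<delta>\<^sup>2 \<le> 4 * \<alpha> * c"
    using assms(1) by (simp add: pos_le_divide_eq power2_eq_square ac_simps)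
  then show ?thesis
    using assms(3) by (simp add: field_simps)
qed

theorem mainTheorem2:
  fixes T :: "'v::banach \<Rightarrow> 'h::{real_inner, complete_space}"
    and J :: "'v \<Rightarrow> real" and p :: "'v \<Rightarrow> real"
    and \<Psi> :: "real \<Rightarrow> real"
    and \<phi>d \<phi>\<alpha> :: 'v and fd f\<delta> :: 'h
    and \<delta> \<alpha> \<sigma> \<tau>l \<tau>u :: real
  assumes T_compact: "compact_operator T" and T_inj: "inj T"
    and J_nonneg: "\<forall>v. 0 \<le> J v" and J_convex: "convex_on UNIV J"
    and \<delta>_pos: "\<delta> > 0" and noise: "norm (fd - f\<delta>) \<le> \<delta>"
    and sol: "J_minimizing_solution T J fd \<phi>d"
    and \<alpha>_pos: "\<alpha> > 0"
    and minimizer: "\<forall>\<phi>. tikhonov T J \<alpha> \<phi>\<alpha> f\<delta> \<le> tikhonov T J \<alpha> \<phi> f\<delta>"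
    and radii: "1 < \<tau>l" "\<tau>l \<le> \<tau>u"
    and discrepancy: "\<tau>l * \<delta> \<le> norm (T \<phi>\<alpha> - f\<delta>)" "norm (T \<phi>\<alpha> - f\<delta>) \<le> \<tau>u * \<delta>"
    and vsc: "VSC T J p \<sigma> \<Psi> \<phi>d"
    and extra: "\<forall>\<phi>. \<sigma> / 2 * (J \<phi>d - J \<phi>) \<le> \<Psi> (norm (T \<phi> - T \<phi>d))"
  shows "\<sigma> / 4 * (\<tau>l - 1) * \<delta>\<^sup>2 / \<Psi> \<delta> \<le> \<alpha>"
proof -
  have \<Psi>: "index_function \<Psi>" "concave_on {0..} \<Psi>" and \<sigma>_pos: "0 < \<sigma>"
    using vsc unfolding VSC_def by auto
  have Td: "T \<phi>d = fd"
    using sol unfolding J_minimizing_solution_def by simp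
  define a where "a = norm (T \<phi>\<alpha> - f\<delta>)"
  have "norm (T \<phi>\<alpha> - T \<phi>d) \<le> a + \<delta>"
    using norm_triangle_ineq[of "T \<phi>\<alpha> - f\<delta>" "f\<delta> - fd"] noise
    unfolding a_def Td by (simp add: norm_minus_commute)
  then have \<Psi>_le: "\<Psi> (norm (T \<phi>\<alpha> - T \<phi>d)) \<le> (a + \<delta>) / \<delta> * \<Psi> \<delta>"
    using \<delta>_pos by (intro concave_index_function_le_scaled[OF \<Psi>]) (auto simp: a_def)
  have "\<sigma> * (a\<^sup>2 - \<delta>\<^sup>2) \<le> \<sigma> * (2 * \<alpha> * (J \<phi>d - J \<phi>\<alpha>))"
    using tikhonov_minimizer_residual_le[OF minimizer Td noise] \<sigma>_pos
    unfolding a_def by (simp add: mult_left_mono)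
  also have "\<dots> \<le> 4 * \<alpha> * \<Psi> (norm (T \<phi>\<alpha> - T \<phi>d))"
    using mult_left_mono[OF extra[rule_format, of \<phi>\<alpha>], of "4 * \<alpha>"] \<alpha>_pos
    by (simp add: algebra_simps)
  also have "\<dots> \<le> 4 * \<alpha> * ((a + \<delta>) / \<delta> * \<Psi> \<delta>)"
    using mult_left_mono[OF \<Psi>_le, of "4 * \<alpha>"] \<alpha>_pos by simp
  finally show ?thesis
    using \<Psi>(1) \<delta>_pos \<sigma>_pos radii(1) discrepancy(1) unfolding index_function_def a_def
    by (intro discrepancy_parameter_lower_bound) auto
qed

end
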